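(* Any GET operation by client $c$ on a key $k$ of partition $p$ in which the client sends $hrv = hrm[:,p]$ (its current row for partition $p$ of the highest-read matrix) satisfies per-key monotonic-read consistency: if the operation is issued at time $t$ and served by server $s$, which reads the value of $k$ at time $t'$, then every $w\in ClientReads(c,k,t)$ is included in $CommittedWrites(s,k,t')$.
   Context: System model. Data is replicated in $D$ datacenters and split into $P$ partitions. In each datacenter $d$, each partition is replicated by a Raft group with a leader $L_d$; Raft guarantees that all members of a group commit the same totally ordered sequence of log entries, each with a log index, in increasing index order. Every version $v$ of a key carries a value, an originating datacenter $v.dc\_id$, the log index $idx(v)$ it received in the Raft log of its originating datacenter, and a hybrid logical clock (HLC) timestamp $v.t=\langle l,c\rangle$; HLC timestamps are compared lexicographically. Writes committed in the group of datacenter $d$ that originated at $d$ are forwarded, in commit order, over FIFO channels to the leaders of the same partition in every other datacenter, which append them (carrying their original index $idx(v)$) to their own Raft logs. Each server $s$ keeps a vector $sv$ of length $D$, initially zero; when $s$ commits a version $v$ it sets $sv[v.dc\_id]:=idx(v)$ and adds $v$ to the version chain of its key. Client protocol. Each client $c$ keeps $D\times P$ matrices $hrm$ (highest read) and $hwm$ (highest write), initially zero, and HLC timestamps $dt_r,dt_w$, initially zero. GET of key $k$ in partition $p$: the client sends vectors $hrv,hwv$ of length $D$ (each either the zero vector or $hrm[:,p]$, resp. $hwm[:,p]$); the server blocks while there is $i$ with $sv[i]<hrv[i]$ or $sv[i]<hwv[i]$; it then returns the version $v$ of $k$ in its version chain with the largest timestamp, together with $v.dc\_id$, $sv[v.dc\_id]$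 and $v.t$; the client sets $hrm[v.dc\_id,p]:=\max(hrm[v.dc\_id,p],sv[v.dc\_id])$ and $dt_r:=\max(dt_r,v.t)$. PUT of key $k$ in partition $p$ at leader $L_d$: the client sends a dependency timestamp $dt$ (one of $0$, $dt_r$, $dt_w$, $\max(dt_r,dt_w)$); the leader updates its HLC $\langle l,c\rangle$ with $dt$ by the rule: $l':=l$; $l:=\max(l',pt,dt.l)$ where $pt$ is its physical clock; then $c:=\max(c,dt.c)+1$ if $l=l'=dt.l$, else $c:=c+1$ if $l=l'$, else $c:=dt.c+1$ if $l=dt.l$, else $c:=0$; it timestamps the new version with the updated HLC value $t$ and $dc\_id=d$, appends it to the Raft log, and after commit replies with $d$, $sv[d]$ and $t$; the client sets $hwm[d,p]:=\max(hwm[d,p],sv[d])$ and $dt_w:=\max(dt_w,t)$. Definitions. $CommittedWrites(s,k,t)$ is the ordered sequence of all writes of key $k$ committed at server $s$ by time $t$; $ClientWrites(c,k,t)$ is the ordered sequence of all writes of $k$ done by client $c$ by time $t$; $ClientReads(c,k,t)$ is the set of writes whose value of $k$ has been read by client $c$ by time $t$. *)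

theory Defs
  imports Main "HOL-Library.Product_Lexorder"
begin

text \<open>HLC timestamps are pairs (l, c) of naturals, compared lexicographically
  (the linear order on pairs comes from HOL-Library.Product_Lexorder).\<close>
type_synonym hlc = "nat \<times> nat"

text \<open>HLC update rule of the leader, given its current clock (l,c), its
  physical clock pt and the client dependency timestamp dt.\<close>
definition hlc_update :: "hlc \<Rightarrow> nat \<Rightarrow> hlc \<Rightarrow> hlc" where
  "hlc_update lc pt dt =
     (let l' = fst lc; c = snd lc; dl = fst dt; dc = snd dt;
          l = max (max l' pt) dl;
          c2 = (if l = l' \<and> l' = dl then max c dc + 1
                else if l = l' then c + 1
                else if l = dl then dc + 1
                else 0)
      in (l, c2))"

text \<open>A version: key, value, originating datacenter, log index in the Raft
  log of its originating datacenter, HLC timestamp.\<close>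
record ('k, 'v) version =
  vkey :: 'k
  vval :: 'v
  vdc  :: nat
  vidx :: nat
  vts  :: hlc

text \<open>Servers are triples (d, p, m): member m of the Raft group replicating
  partition p in datacenter d; member 0 is the leader L_d.\<close>
type_synonym server = "nat \<times> nat \<times> nat"

datatype ('k, 'v) pending =
    PGet server 'k "nat \<Rightarrow> nat" "nat \<Rightarrow> nat"   \<comment> \<open>server, key, hrv, hwv\<close>
  | PPut server "('k, 'v) version"

record ('c, 'k, 'v) state =
  rlog  :: "nat \<times> nat \<Rightarrow> ('k, 'v) version list"  \<comment> \<open>Raft log of group (d,p)\<close>
  cmt   :: "server \<Rightarrow> nat"           \<comment> \<open>number of log entries committed at a server\<close>
  sv    :: "server \<Rightarrow> nat \<Rightarrow> nat"
  clk   :: "nat \<times> nat \<Rightarrow> hlc"         \<comment> \<open>HLC of leader of group (d,p)\<close>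
  fwd   :: "nat \<times> nat \<times> nat \<Rightarrow> nat"  \<comment> \<open>(d,d',p): entries received so far on FIFO channel d to d'\<close>
  hrm   :: "'c \<Rightarrow> nat \<times> nat \<Rightarrow> nat"  \<comment> \<open>hrm of client, indexed (dc, partition)\<close>
  hwm   :: "'c \<Rightarrow> nat \<times> nat \<Rightarrow> nat"
  dtr   :: "'c \<Rightarrow> hlc"
  dtw   :: "'c \<Rightarrow> hlc"
  pend  :: "'c \<Rightarrow> ('k, 'v) pending option"
  creads :: "'c \<Rightarrow> ('k, 'v) version set"

definition init_state :: "('c, 'k, 'v) state" where
  "init_state = \<lparr> rlog = (\<lambda>_. []), cmt = (\<lambda>_. 0), sv = (\<lambda>_ _. 0), clk = (\<lambda>_. (0, 0)),
     fwd = (\<lambda>_. 0), hrm = (\<lambda>_ _. 0), hwm = (\<lambda>_ _. 0), dtr = (\<lambda>_. (0, 0)),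
     dtw = (\<lambda>_. (0, 0)), pend = (\<lambda>_. None), creads = (\<lambda>_. {}) \<rparr>"

text \<open>Committed prefix of the log at a server (Raft: members commit the same
  sequence, in increasing index order).\<close>
definition committed :: "('c, 'k, 'v) state \<Rightarrow> server \<Rightarrow> ('k, 'v) version list" where
  "committed \<sigma> s = take (cmt \<sigma> s) (rlog \<sigma> (fst s, fst (snd s)))"

text \<open>Writes originating at d, committed (at the leader) in group (d,p), in
  commit order: this is the contents ever put on the FIFO channels from d.\<close>
definition sent_writes :: "('c, 'k, 'v) state \<Rightarrow> nat \<Rightarrow> nat \<Rightarrow> ('k, 'v) version list" where
  "sent_writes \<sigma> d p = filter (\<lambda>v. vdc v = d) (committed \<sigma> (d, p, 0))"

datatype dep_choice = DepZero | DepR | DepW | DepMax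

definition dep_ts :: "('c, 'k, 'v) state \<Rightarrow> 'c \<Rightarrow> dep_choice \<Rightarrow> hlc" where
  "dep_ts \<sigma> c ch = (case ch of DepZero \<Rightarrow> (0, 0) | DepR \<Rightarrow> dtr \<sigma> c | DepW \<Rightarrow> dtw \<sigma> c
                     | DepMax \<Rightarrow> max (dtr \<sigma> c) (dtw \<sigma> c))"

datatype ('c, 'k, 'v) event =
    Skip
  | Commit nat nat nat                 \<comment> \<open>member (d,p,m) commits its next log entry\<close>
  | Forward nat nat nat                \<comment> \<open>leader of (d',p) receives next write from channel d to d'\<close>
  | GetReq 'c 'k nat nat bool bool     \<comment> \<open>client, key, dc d, member m, send hrm column?, send hwm column?\<close>
  | GetResp 'c "('k, 'v) version option"
  | PutReq 'c 'k 'v nat nat dep_choice \<comment> \<open>client, key, value, dc d, physical clock pt, choice of dt\<close>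
  | PutResp 'c

fun step :: "nat \<Rightarrow> nat \<Rightarrow> nat \<Rightarrow> ('k \<Rightarrow> nat) \<Rightarrow>
    ('c, 'k, 'v) state \<Rightarrow> ('c, 'k, 'v) event \<Rightarrow> ('c, 'k, 'v) state \<Rightarrow> bool" where
  "step D P R part \<sigma> Skip \<sigma>' = (\<sigma>' = \<sigma>)"
| "step D P R part \<sigma> (Commit d p m) \<sigma>' =
     (let s = (d, p, m); v = rlog \<sigma> (d, p) ! cmt \<sigma> s in
      d < D \<and> p < P \<and> m < R \<and> cmt \<sigma> s < length (rlog \<sigma> (d, p)) \<and>
      \<sigma>' = \<sigma>\<lparr> cmt := (cmt \<sigma>)(s := cmt \<sigma> s + 1),
              sv := (sv \<sigma>)(s := (sv \<sigma> s)(vdc v := vidx v)) \<rparr>)"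
| "step D P R part \<sigma> (Forward d d' p) \<sigma>' =
     (let ws = sent_writes \<sigma> d p; n = fwd \<sigma> (d, d', p) in
      d < D \<and> d' < D \<and> d \<noteq> d' \<and> p < P \<and> n < length ws \<and>
      \<sigma>' = \<sigma>\<lparr> rlog := (rlog \<sigma>)((d', p) := rlog \<sigma> (d', p) @ [ws ! n]),
              fwd := (fwd \<sigma>)((d, d', p) := n + 1) \<rparr>)"
| "step D P R part \<sigma> (GetReq c k d m useR useW) \<sigma>' =
     (let p = part k;
          hrv = (if useR then (\<lambda>i. hrm \<sigma> c (i, p)) else (\<lambda>_. 0));
          hwv = (if useW then (\<lambda>i. hwm \<sigma> c (i, p)) else (\<lambda>_. 0)) in
      pend \<sigma> c = None \<and> d < D \<and> p < P \<and> m < R \<and>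
      \<sigma>' = \<sigma>\<lparr> pend := (pend \<sigma>)(c := Some (PGet (d, p, m) k hrv hwv)) \<rparr>)"
| "step D P R part \<sigma> (GetResp c r) \<sigma>' =
     (\<exists>s k hrv hwv. pend \<sigma> c = Some (PGet s k hrv hwv) \<and>
        (\<forall>i<D. hrv i \<le> sv \<sigma> s i \<and> hwv i \<le> sv \<sigma> s i) \<and>
        (let ch = filter (\<lambda>v. vkey v = k) (committed \<sigma> s); p = fst (snd s) in
         case r of
           None \<Rightarrow> ch = [] \<and> \<sigma>' = \<sigma>\<lparr> pend := (pend \<sigma>)(c := None) \<rparr>
         | Some v \<Rightarrow> v \<in> set ch \<and> (\<forall>u\<in>set ch. vts u \<le> vts v) \<and>
             \<sigma>' = \<sigma>\<lparr> pend := (pend \<sigma>)(c := None),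
                     hrm := (hrm \<sigma>)(c := (hrm \<sigma> c)((vdc v, p) :=
                                 max (hrm \<sigma> c (vdc v, p)) (sv \<sigma> s (vdc v)))),
                     dtr := (dtr \<sigma>)(c := max (dtr \<sigma> c) (vts v)),
                     creads := (creads \<sigma>)(c := insert v (creads \<sigma> c)) \<rparr>))"
| "step D P R part \<sigma> (PutReq c k x d pt ch) \<sigma>' =
     (let p = part k; t = hlc_update (clk \<sigma> (d, p)) pt (dep_ts \<sigma> c ch);
          v = \<lparr> vkey = k, vval = x, vdc = d, vidx = length (rlog \<sigma> (d, p)) + 1, vts = t \<rparr> in
      pend \<sigma> c = None \<and> d < D \<and> p < P \<and> 0 < R \<and>
      \<sigma>' = \<sigma>\<lparr> clk := (clk \<sigma>)((d, p) := t),
              rlog := (rlog \<sigma>)((d, p) := rlog \<sigma> (d, p) @ [v]),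
              pend := (pend \<sigma>)(c := Some (PPut (d, p, 0) v)) \<rparr>)"
| "step D P R part \<sigma> (PutResp c) \<sigma>' =
     (\<exists>s v. pend \<sigma> c = Some (PPut s v) \<and> v \<in> set (committed \<sigma> s) \<and>
        (let d = fst s; p = fst (snd s) in
         \<sigma>' = \<sigma>\<lparr> pend := (pend \<sigma>)(c := None),
                 hwm := (hwm \<sigma>)(c := (hwm \<sigma> c)((d, p) := max (hwm \<sigma> c (d, p)) (sv \<sigma> s d))),
                 dtw := (dtw \<sigma>)(c := max (dtw \<sigma> c) (vts v)) \<rparr>))"

definition is_exec :: "nat \<Rightarrow> nat \<Rightarrow> nat \<Rightarrow> ('k \<Rightarrow> nat) \<Rightarrow>
    (nat \<Rightarrow> ('c, 'k, 'v) state) \<Rightarrow> (nat \<Rightarrow> ('c, 'k, 'v) event) \<Rightarrow> bool" where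
  "is_exec D P R part \<sigma> ev \<longleftrightarrow>
     \<sigma> 0 = init_state \<and> (\<forall>i. step D P R part (\<sigma> i) (ev i) (\<sigma> (Suc i)))"

definition CommittedWrites :: "(nat \<Rightarrow> ('c, 'k, 'v) state) \<Rightarrow> server \<Rightarrow> 'k \<Rightarrow> nat
    \<Rightarrow> ('k, 'v) version list" where
  "CommittedWrites \<sigma> s k t = filter (\<lambda>v. vkey v = k) (committed (\<sigma> t) s)"

definition ClientReads :: "(nat \<Rightarrow> ('c, 'k, 'v) state) \<Rightarrow> 'c \<Rightarrow> 'k \<Rightarrow> nat
    \<Rightarrow> ('k, 'v) version set" where
  "ClientReads \<sigma> c k t = {w \<in> creads (\<sigma> t) c. vkey w = k}"

end

theory Submission
  imports Defs "HOL-Library.Sublist"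
begin

text \<open>Every write a client has read originates at some datacenter i, and its index there is
  bounded by the entry of hrm for i and the key's partition. The GET request carries this row of
  hrm, and the server answers only once its vector sv dominates it. Since the writes originating
  at i reach every replica of the partition in their original order (FIFO forwarding, in-order
  Raft commit), and sv[i] is the index of the last such write committed, every write from i
  with index at most sv[i] is already committed at the server.\<close>

abbreviation index_sorted :: "('k, 'v) version list \<Rightarrow> bool" where
  "index_sorted \<equiv> sorted_wrt (\<lambda>a b. vidx a < vidx b)"

definition origin_log :: "('c, 'k, 'v) state \<Rightarrow> nat \<Rightarrow> nat \<Rightarrow> ('k, 'v) version list" where
  "origin_log \<sigma> d p = filter (\<lambda>v. vdc v = d) (rlog \<sigma> (d, p))"

definition origin_logs_indexed :: "('c, 'k, 'v) state \<Rightarrow> bool" where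
  "origin_logs_indexed \<sigma> \<longleftrightarrow> (\<forall>d p. index_sorted (origin_log \<sigma> d p) \<and>
     (\<forall>v\<in>set (origin_log \<sigma> d p). 0 < vidx v \<and> vidx v \<le> length (rlog \<sigma> (d, p))))"

definition commits_in_log :: "('c, 'k, 'v) state \<Rightarrow> bool" where
  "commits_in_log \<sigma> \<longleftrightarrow> (\<forall>s. cmt \<sigma> s \<le> length (rlog \<sigma> (fst s, fst (snd s))))"

definition channels_fifo :: "('c, 'k, 'v) state \<Rightarrow> bool" where
  "channels_fifo \<sigma> \<longleftrightarrow> (\<forall>d d' p. d \<noteq> d' \<longrightarrow>
     filter (\<lambda>v. vdc v = d) (rlog \<sigma> (d', p)) = take (fwd \<sigma> (d, d', p)) (sent_writes \<sigma> d p) \<and>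
     fwd \<sigma> (d, d', p) \<le> length (sent_writes \<sigma> d p))"

definition sv_last_index :: "('c, 'k, 'v) state \<Rightarrow> bool" where
  "sv_last_index \<sigma> \<longleftrightarrow> (\<forall>s i. sv \<sigma> s i =
     (if filter (\<lambda>v. vdc v = i) (committed \<sigma> s) = [] then 0
      else vidx (last (filter (\<lambda>v. vdc v = i) (committed \<sigma> s)))))"

definition logs_well_placed :: "nat \<Rightarrow> ('k \<Rightarrow> nat) \<Rightarrow> ('c, 'k, 'v) state \<Rightarrow> bool" where
  "logs_well_placed D part \<sigma> \<longleftrightarrow>
     (\<forall>d p v. v \<in> set (rlog \<sigma> (d, p)) \<longrightarrow> part (vkey v) = p \<and> vdc v < D)"

definition replication_inv :: "nat \<Rightarrow> ('k \<Rightarrow> nat) \<Rightarrow> ('c, 'k, 'v) state \<Rightarrow> bool" where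
  "replication_inv D part \<sigma> \<longleftrightarrow> origin_logs_indexed \<sigma> \<and> commits_in_log \<sigma> \<and>
     channels_fifo \<sigma> \<and> sv_last_index \<sigma> \<and> logs_well_placed D part \<sigma>"

definition reads_covered :: "nat \<Rightarrow> ('k \<Rightarrow> nat) \<Rightarrow> ('c, 'k, 'v) state \<Rightarrow> bool" where
  "reads_covered D part \<sigma> \<longleftrightarrow> (\<forall>c v. v \<in> creads \<sigma> c \<longrightarrow> vdc v < D \<and>
     vidx v \<le> hrm \<sigma> c (vdc v, part (vkey v)) \<and> v \<in> set (origin_log \<sigma> (vdc v) (part (vkey v))))"

definition system_inv :: "nat \<Rightarrow> ('k \<Rightarrow> nat) \<Rightarrow> ('c, 'k, 'v) state \<Rightarrow> bool" where
  "system_inv D part \<sigma> \<longleftrightarrow> replication_inv D part \<sigma> \<and> reads_covered D part \<sigma>"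

lemma index_sorted_prefix_contains:
  assumes "index_sorted xs" "prefix F xs" "F \<noteq> []" "w \<in> set xs" "vidx w \<le> vidx (last F)"
  shows "w \<in> set F"
proof (rule ccontr)
  assume "w \<notin> set F"
  obtain G where xs: "xs = F @ G" using assms(2) prefixE by blast
  with \<open>w \<notin> set F\<close> assms(4) have "w \<in> set G" by auto
  with assms(1,3) xs have "vidx (last F) < vidx w" by (auto simp: sorted_wrt_append)
  with assms(5) show False by simp
qed

lemma index_sorted_le_last:
  assumes "index_sorted F" "v \<in> set F"
  shows "vidx v \<le> vidx (last F)"
proof -
  obtain xs ys where F: "F = xs @ v # ys" using split_list[OF assms(2)] by blast
  show ?thesis
  proof (cases "ys = []")
    case False
    then have "last ys \<in> set ys" by simp
    with assms(1) False show ?thesis by (simp add: F sorted_wrt_append less_imp_le)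
  qed (simp add: F)
qed

lemma committed_origin_prefix:
  assumes "channels_fifo \<sigma>"
  shows "prefix (filter (\<lambda>v. vdc v = i) (committed \<sigma> (d, p, m))) (origin_log \<sigma> i p)"
proof -
  have "prefix (filter (\<lambda>v. vdc v = i) (rlog \<sigma> (d, p))) (origin_log \<sigma> i p)"
  proof (cases "i = d")
    case False
    have "prefix (sent_writes \<sigma> i p) (origin_log \<sigma> i p)"
      unfolding sent_writes_def origin_log_def committed_def
      by (simp add: filter_mono_prefix take_is_prefix)
    with False assms show ?thesis
      unfolding channels_fifo_def by (metis prefix_order.trans take_is_prefix)
  qed (simp add: origin_log_def)
  then show ?thesis
    unfolding committed_def by (metis filter_mono_prefix prefix_order.trans take_is_prefix fst_conv snd_conv)
qed

lemma committed_if_index_le_sv: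
  assumes "replication_inv D part \<sigma>" "w \<in> set (origin_log \<sigma> i p)" "vidx w \<le> sv \<sigma> (d, p, m) i"
  shows "w \<in> set (committed \<sigma> (d, p, m))"
proof -
  let ?F = "filter (\<lambda>v. vdc v = i) (committed \<sigma> (d, p, m))"
  have inv: "origin_logs_indexed \<sigma>" "channels_fifo \<sigma>" "sv_last_index \<sigma>"
    using assms(1) by (simp_all add: replication_inv_def)
  have sv: "sv \<sigma> (d, p, m) i = (if ?F = [] then 0 else vidx (last ?F))"
    using inv(3) unfolding sv_last_index_def by blast
  have "0 < vidx w" using inv(1) assms(2) unfolding origin_logs_indexed_def by blast
  with assms(3) sv have F: "?F \<noteq> []" "sv \<sigma> (d, p, m) i = vidx (last ?F)" by auto
  have "index_sorted (origin_log \<sigma> i p)" using inv(1) by (simp add: origin_logs_indexed_def)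
  then have "w \<in> set ?F"
    using committed_origin_prefix[OF inv(2)] F(1) assms(2)
    by (rule index_sorted_prefix_contains) (use assms(3) F(2) in simp)
  then show ?thesis by simp
qed

lemma committed_index_le_sv:
  assumes "replication_inv D part \<sigma>" "v \<in> set (committed \<sigma> (d, p, m))"
  shows "vidx v \<le> sv \<sigma> (d, p, m) (vdc v) \<and> v \<in> set (origin_log \<sigma> (vdc v) p)"
proof -
  let ?F = "filter (\<lambda>u. vdc u = vdc v) (committed \<sigma> (d, p, m))"
  have inv: "origin_logs_indexed \<sigma>" "channels_fifo \<sigma>" "sv_last_index \<sigma>"
    using assms(1) by (simp_all add: replication_inv_def)
  have pf: "prefix ?F (origin_log \<sigma> (vdc v) p)" using committed_origin_prefix[OF inv(2)] .
  have v: "v \<in> set ?F" using assms(2) by simp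
  have "index_sorted ?F"
    using pf inv(1) unfolding origin_logs_indexed_def by (metis prefixE sorted_wrt_append)
  then have "vidx v \<le> vidx (last ?F)" using v by (rule index_sorted_le_last)
  moreover have "sv \<sigma> (d, p, m) (vdc v) = vidx (last ?F)"
    using inv(3) v unfolding sv_last_index_def by (metis empty_iff empty_set)
  moreover have "v \<in> set (origin_log \<sigma> (vdc v) p)" using pf v by (meson set_mono_prefix subsetD)
  ultimately show ?thesis by simp
qed

lemma step_GetRespE:
  assumes "step D P R part \<sigma> (GetResp c r) \<sigma>'"
  obtains s k hrv hwv where "pend \<sigma> c = Some (PGet s k hrv hwv)" "\<forall>i<D. hrv i \<le> sv \<sigma> s i"
    "\<sigma>' = \<sigma>\<lparr>pend := (pend \<sigma>)(c := None)\<rparr>"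
  | s k hrv hwv v where "pend \<sigma> c = Some (PGet s k hrv hwv)" "\<forall>i<D. hrv i \<le> sv \<sigma> s i"
    "v \<in> set (committed \<sigma> s)"
    "\<sigma>' = \<sigma>\<lparr>pend := (pend \<sigma>)(c := None),
       hrm := (hrm \<sigma>)(c := (hrm \<sigma> c)((vdc v, fst (snd s)) :=
                 max (hrm \<sigma> c (vdc v, fst (snd s))) (sv \<sigma> s (vdc v)))),
       dtr := (dtr \<sigma>)(c := max (dtr \<sigma> c) (vts v)),
       creads := (creads \<sigma>)(c := insert v (creads \<sigma> c))\<rparr>"
  using assms by (cases r) (auto simp: Let_def)

lemma rlog_step_prefix:
  assumes "step D P R part \<sigma> e \<sigma>'"
  shows "prefix (rlog \<sigma> x) (rlog \<sigma>' x)"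
proof (cases e)
  case (GetResp c r)
  from assms[unfolded GetResp] show ?thesis by (rule step_GetRespE) auto
qed (use assms in \<open>auto simp: Let_def\<close>)

lemma rlog_exec_prefix:
  assumes "is_exec D P R part \<sigma> ev" "i \<le> j"
  shows "prefix (rlog (\<sigma> i) x) (rlog (\<sigma> j) x)"
  using assms(2)
proof (induction j rule: dec_induct)
  case (step n)
  with assms(1) show ?case
    unfolding is_exec_def by (metis rlog_step_prefix prefix_order.trans)
qed simp

lemma replication_inv_cong:
  assumes "rlog \<sigma>' = rlog \<sigma>" "cmt \<sigma>' = cmt \<sigma>" "sv \<sigma>' = sv \<sigma>" "fwd \<sigma>' = fwd \<sigma>"
  shows "replication_inv D part \<sigma>' = replication_inv D part \<sigma>"
  using assms
  by (simp add: replication_inv_def origin_logs_indexed_def commits_in_log_def channels_fifo_def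
      sv_last_index_def logs_well_placed_def origin_log_def sent_writes_def committed_def)

lemma origin_log_prefix:
  assumes "\<And>x. prefix (rlog \<sigma> x) (rlog \<sigma>' x)"
  shows "prefix (origin_log \<sigma> d p) (origin_log \<sigma>' d p)"
  unfolding origin_log_def using assms by (rule filter_mono_prefix)

lemma reads_covered_mono:
  assumes "reads_covered D part \<sigma>" "\<And>x. prefix (rlog \<sigma> x) (rlog \<sigma>' x)"
    "creads \<sigma>' = creads \<sigma>" "hrm \<sigma>' = hrm \<sigma>"
  shows "reads_covered D part \<sigma>'"
proof -
  have "set (origin_log \<sigma> d p) \<subseteq> set (origin_log \<sigma>' d p)" for d p
    using origin_log_prefix[OF assms(2)] by (rule set_mono_prefix)
  with assms(1) show ?thesis unfolding reads_covered_def assms(3,4) by blast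
qed

lemma replication_inv_Commit:
  assumes "replication_inv D part \<sigma>" "step D P R part \<sigma> (Commit d p m) \<sigma>'"
  shows "replication_inv D part \<sigma>'"
proof -
  define s0 where "s0 = (d, p, m)"
  define v where "v = rlog \<sigma> (d, p) ! cmt \<sigma> s0"
  have n: "cmt \<sigma> s0 < length (rlog \<sigma> (d, p))"
    and \<sigma>': "\<sigma>' = \<sigma>\<lparr>cmt := (cmt \<sigma>)(s0 := cmt \<sigma> s0 + 1),
                    sv := (sv \<sigma>)(s0 := (sv \<sigma> s0)(vdc v := vidx v))\<rparr>"
    using assms(2) by (simp_all add: s0_def v_def Let_def)
  have committed_s0: "committed \<sigma>' s0 = committed \<sigma> s0 @ [v]"
    using n by (simp add: \<sigma>' committed_def s0_def v_def take_Suc_conv_app_nth)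
  have committed_other: "s \<noteq> s0 \<Longrightarrow> committed \<sigma>' s = committed \<sigma> s" for s
    by (simp add: \<sigma>' committed_def)
  have "prefix (committed \<sigma> s) (committed \<sigma>' s)" for s
    using committed_s0 committed_other by (cases "s = s0") auto
  then have sent_prefix: "prefix (sent_writes \<sigma> a q) (sent_writes \<sigma>' a q)" for a q
    unfolding sent_writes_def by (rule filter_mono_prefix)
  have "channels_fifo \<sigma>'"
    unfolding channels_fifo_def
  proof (intro allI impI)
    fix a a' q :: nat
    assume "a \<noteq> a'"
    then have old: "filter (\<lambda>v. vdc v = a) (rlog \<sigma> (a', q)) = take (fwd \<sigma> (a, a', q)) (sent_writes \<sigma> a q)"
      "fwd \<sigma> (a, a', q) \<le> length (sent_writes \<sigma> a q)"
      using assms(1) unfolding replication_inv_def channels_fifo_def by blast+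
    obtain zs where "sent_writes \<sigma>' a q = sent_writes \<sigma> a q @ zs"
      using sent_prefix prefixE by blast
    with old show "filter (\<lambda>v. vdc v = a) (rlog \<sigma>' (a', q)) = take (fwd \<sigma>' (a, a', q)) (sent_writes \<sigma>' a q) \<and>
      fwd \<sigma>' (a, a', q) \<le> length (sent_writes \<sigma>' a q)"
      by (simp add: \<sigma>')
  qed
  moreover have "sv_last_index \<sigma>'"
    using assms(1) committed_s0 committed_other unfolding replication_inv_def sv_last_index_def
    by (auto simp: \<sigma>')
  moreover have "commits_in_log \<sigma>'"
    using assms(1) n unfolding replication_inv_def commits_in_log_def by (simp add: \<sigma>' s0_def)
  ultimately show ?thesis
    using assms(1) unfolding replication_inv_def
    by (simp add: \<sigma>' origin_logs_indexed_def origin_log_def logs_well_placed_def)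
qed

lemma replication_inv_Forward:
  assumes "replication_inv D part \<sigma>" "step D P R part \<sigma> (Forward d d' p) \<sigma>'"
  shows "replication_inv D part \<sigma>'"
proof -
  define ws where "ws = sent_writes \<sigma> d p"
  define n where "n = fwd \<sigma> (d, d', p)"
  have h: "d < D" "d \<noteq> d'" "n < length ws"
    and \<sigma>': "\<sigma>' = \<sigma>\<lparr>rlog := (rlog \<sigma>)((d', p) := rlog \<sigma> (d', p) @ [ws ! n]),
                    fwd := (fwd \<sigma>)((d, d', p) := n + 1)\<rparr>"
    using assms(2) by (simp_all add: ws_def n_def Let_def)
  have inv: "origin_logs_indexed \<sigma>" "commits_in_log \<sigma>" "channels_fifo \<sigma>" "sv_last_index \<sigma>"
    "logs_well_placed D part \<sigma>"
    using assms(1) by (simp_all add: replication_inv_def)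
  have w: "ws ! n \<in> set ws" using h(3) by simp
  then have w_dc: "vdc (ws ! n) = d" by (simp add: ws_def sent_writes_def)
  from w have w_log: "ws ! n \<in> set (rlog \<sigma> (d, p))"
    unfolding ws_def sent_writes_def committed_def by (auto dest: in_set_takeD)
  have rlog': "rlog \<sigma>' x = (if x = (d', p) then rlog \<sigma> (d', p) @ [ws ! n] else rlog \<sigma> x)" for x
    by (simp add: \<sigma>')
  have committed': "committed \<sigma>' = committed \<sigma>"
    using inv(2) unfolding commits_in_log_def committed_def by (simp add: \<sigma>' fun_eq_iff)
  then have sent': "sent_writes \<sigma>' = sent_writes \<sigma>" by (simp add: sent_writes_def fun_eq_iff)
  have origin': "origin_log \<sigma>' = origin_log \<sigma>"
    using h(2) w_dc by (auto simp: origin_log_def rlog' fun_eq_iff)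
  have "channels_fifo \<sigma>'"
    unfolding channels_fifo_def sent'
  proof (intro allI impI)
    fix a a' q :: nat
    assume "a \<noteq> a'"
    then have old: "filter (\<lambda>v. vdc v = a) (rlog \<sigma> (a', q)) = take (fwd \<sigma> (a, a', q)) (sent_writes \<sigma> a q)"
      "fwd \<sigma> (a, a', q) \<le> length (sent_writes \<sigma> a q)"
      using inv(3) unfolding channels_fifo_def by blast+
    have "take n ws @ [ws ! n] = take (Suc n) ws" using h(3) by (simp add: take_Suc_conv_app_nth)
    with old h w_dc show "filter (\<lambda>v. vdc v = a) (rlog \<sigma>' (a', q)) = take (fwd \<sigma>' (a, a', q)) (sent_writes \<sigma> a q) \<and>
      fwd \<sigma>' (a, a', q) \<le> length (sent_writes \<sigma> a q)"
      by (auto simp: rlog' \<sigma>' ws_def n_def)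
  qed
  moreover have "origin_logs_indexed \<sigma>'"
    using inv(1) unfolding origin_logs_indexed_def origin' by (simp add: rlog') (meson le_SucI)
  moreover have "commits_in_log \<sigma>'"
    using inv(2) unfolding commits_in_log_def by (simp add: rlog' \<sigma>') (meson le_SucI)
  moreover have "sv_last_index \<sigma>'"
    using inv(4) unfolding sv_last_index_def committed' by (simp add: \<sigma>')
  moreover have "logs_well_placed D part \<sigma>'"
    using inv(5) w_log h(1) w_dc unfolding logs_well_placed_def by (auto simp: rlog')
  ultimately show ?thesis by (simp add: replication_inv_def)
qed

lemma replication_inv_PutReq:
  assumes "replication_inv D part \<sigma>" "step D P R part \<sigma> (PutReq c k x d pt ch) \<sigma>'"
  shows "replication_inv D part \<sigma>'"
proof -
  define p where "p = part k"
  define v where "v = \<lparr>vkey = k, vval = x, vdc = d, vidx = length (rlog \<sigma> (d, p)) + 1,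
    vts = hlc_update (clk \<sigma> (d, p)) pt (dep_ts \<sigma> c ch)\<rparr>"
  have "d < D"
    and \<sigma>': "\<sigma>' = \<sigma>\<lparr>clk := (clk \<sigma>)((d, p) := vts v),
                    rlog := (rlog \<sigma>)((d, p) := rlog \<sigma> (d, p) @ [v]),
                    pend := (pend \<sigma>)(c := Some (PPut (d, p, 0) v))\<rparr>"
    using assms(2) by (simp_all add: p_def v_def Let_def)
  have inv: "origin_logs_indexed \<sigma>" "commits_in_log \<sigma>" "channels_fifo \<sigma>" "sv_last_index \<sigma>"
    "logs_well_placed D part \<sigma>"
    using assms(1) by (simp_all add: replication_inv_def)
  have v: "vdc v = d" "vidx v = length (rlog \<sigma> (d, p)) + 1" "part (vkey v) = p"
    by (simp_all add: v_def p_def)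
  have rlog': "rlog \<sigma>' y = (if y = (d, p) then rlog \<sigma> (d, p) @ [v] else rlog \<sigma> y)" for y
    by (simp add: \<sigma>')
  have committed': "committed \<sigma>' = committed \<sigma>"
    using inv(2) unfolding commits_in_log_def committed_def by (simp add: \<sigma>' fun_eq_iff)
  then have sent': "sent_writes \<sigma>' = sent_writes \<sigma>" by (simp add: sent_writes_def fun_eq_iff)
  have origin': "origin_log \<sigma>' i q = (if (i, q) = (d, p) then origin_log \<sigma> i q @ [v] else origin_log \<sigma> i q)"
    for i q
    using v by (auto simp: origin_log_def rlog')
  \<comment> \<open>The new write carries the index of its own log position, above every earlier index.\<close>
  have "origin_logs_indexed \<sigma>'"
    unfolding origin_logs_indexed_def
  proof (intro allI)
    fix i q
    have "index_sorted (origin_log \<sigma> i q)"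
      "\<forall>u\<in>set (origin_log \<sigma> i q). 0 < vidx u \<and> vidx u \<le> length (rlog \<sigma> (i, q))"
      using inv(1) unfolding origin_logs_indexed_def by blast+
    with v show "index_sorted (origin_log \<sigma>' i q) \<and>
      (\<forall>u\<in>set (origin_log \<sigma>' i q). 0 < vidx u \<and> vidx u \<le> length (rlog \<sigma>' (i, q)))"
      unfolding origin' rlog' by (cases "(i, q) = (d, p)") (auto simp: sorted_wrt_append)
  qed
  moreover have "commits_in_log \<sigma>'"
    using inv(2) unfolding commits_in_log_def by (simp add: rlog' \<sigma>') (meson le_SucI)
  moreover have "channels_fifo \<sigma>'"
    using inv(3) v unfolding channels_fifo_def sent' by (auto simp: rlog' \<sigma>')
  moreover have "sv_last_index \<sigma>'"
    using inv(4) unfolding sv_last_index_def committed' by (simp add: \<sigma>')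
  moreover have "logs_well_placed D part \<sigma>'"
    using inv(5) v \<open>d < D\<close> unfolding logs_well_placed_def by (auto simp: rlog')
  ultimately show ?thesis by (simp add: replication_inv_def)
qed

lemma replication_inv_step:
  assumes "replication_inv D part \<sigma>" "step D P R part \<sigma> e \<sigma>'"
  shows "replication_inv D part \<sigma>'"
proof (cases e)
  case Commit
  with assms show ?thesis by (blast intro: replication_inv_Commit)
next
  case Forward
  with assms show ?thesis by (blast intro: replication_inv_Forward)
next
  case PutReq
  with assms show ?thesis by (blast intro: replication_inv_PutReq)
next
  case (GetResp c r)
  from assms(2)[unfolded GetResp]
  have "rlog \<sigma>' = rlog \<sigma> \<and> cmt \<sigma>' = cmt \<sigma> \<and> sv \<sigma>' = sv \<sigma> \<and> fwd \<sigma>' = fwd \<sigma>"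
    by (rule step_GetRespE) auto
  with assms(1) show ?thesis using replication_inv_cong by blast
next
  case GetReq
  with assms(2) have "rlog \<sigma>' = rlog \<sigma> \<and> cmt \<sigma>' = cmt \<sigma> \<and> sv \<sigma>' = sv \<sigma> \<and> fwd \<sigma>' = fwd \<sigma>"
    by (auto simp: Let_def)
  with assms(1) show ?thesis using replication_inv_cong by blast
next
  case PutResp
  with assms(2) have "rlog \<sigma>' = rlog \<sigma> \<and> cmt \<sigma>' = cmt \<sigma> \<and> sv \<sigma>' = sv \<sigma> \<and> fwd \<sigma>' = fwd \<sigma>"
    by auto
  with assms(1) show ?thesis using replication_inv_cong by blast
qed (use assms in simp)

lemma reads_covered_GetResp:
  assumes "system_inv D part \<sigma>" "step D P R part \<sigma> (GetResp c r) \<sigma>'"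
  shows "reads_covered D part \<sigma>'"
  using assms(2)
proof (cases rule: step_GetRespE)
  case 1
  with assms(1) show ?thesis by (auto simp: system_inv_def intro: reads_covered_mono)
next
  case (2 s k hrv hwv v)
  obtain sd sp sm where s: "s = (sd, sp, sm)" by (cases s)
  have inv: "replication_inv D part \<sigma>" "reads_covered D part \<sigma>"
    using assms(1) by (simp_all add: system_inv_def)
  from 2 s have "v \<in> set (rlog \<sigma> (sd, sp))" by (auto simp: committed_def dest: in_set_takeD)
  with inv(1) have v: "part (vkey v) = sp" "vdc v < D"
    unfolding replication_inv_def logs_well_placed_def by blast+
  have v_origin: "vidx v \<le> sv \<sigma> s (vdc v)" "v \<in> set (origin_log \<sigma> (vdc v) sp)"
    using committed_index_le_sv[OF inv(1)] 2 s by blast+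
  have origin': "origin_log \<sigma>' = origin_log \<sigma>" and hrm_mono: "hrm \<sigma> c' x \<le> hrm \<sigma>' c' x" for c' x
    using 2 by (simp_all add: origin_log_def fun_eq_iff)
  show ?thesis
    unfolding reads_covered_def origin'
  proof (intro allI impI)
    fix c' u
    assume "u \<in> creads \<sigma>' c'"
    then consider "c' = c" "u = v" | "u \<in> creads \<sigma> c'" using 2 by (auto split: if_splits)
    then show "vdc u < D \<and> vidx u \<le> hrm \<sigma>' c' (vdc u, part (vkey u)) \<and>
      u \<in> set (origin_log \<sigma> (vdc u) (part (vkey u)))"
    proof cases
      case 1
      with 2 s v v_origin show ?thesis by auto
    next
      case 2
      with inv(2) hrm_mono show ?thesis unfolding reads_covered_def by (meson le_trans)
    qed
  qed
qed

lemma system_inv_step: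
  assumes "system_inv D part \<sigma>" "step D P R part \<sigma> e \<sigma>'"
  shows "system_inv D part \<sigma>'"
proof -
  have "reads_covered D part \<sigma>'"
  proof (cases "\<exists>c r. e = GetResp c r")
    case True
    with assms show ?thesis by (blast intro: reads_covered_GetResp)
  next
    case False
    with assms(2) have "creads \<sigma>' = creads \<sigma> \<and> hrm \<sigma>' = hrm \<sigma>"
      by (cases e) (auto simp: Let_def)
    moreover have "reads_covered D part \<sigma>" using assms(1) by (simp add: system_inv_def)
    ultimately show ?thesis using reads_covered_mono[OF _ rlog_step_prefix[OF assms(2)]] by blast
  qed
  with assms show ?thesis by (auto simp: system_inv_def intro: replication_inv_step)
qed

lemma system_inv_exec:
  assumes "is_exec D P R part \<sigma> ev"
  shows "system_inv D part (\<sigma> n)"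
proof (induction n)
  case 0
  from assms show ?case
    by (simp add: is_exec_def init_state_def system_inv_def replication_inv_def reads_covered_def
        origin_logs_indexed_def commits_in_log_def channels_fifo_def sv_last_index_def
        logs_well_placed_def origin_log_def committed_def sent_writes_def)
next
  case (Suc n)
  with assms show ?case unfolding is_exec_def by (blast intro: system_inv_step)
qed

lemma GetResp_sv_dominates:
  assumes "step D P R part \<sigma> (GetResp c r) \<sigma>'" "pend \<sigma> c = Some (PGet s k hrv hwv)"
  shows "\<forall>i<D. hrv i \<le> sv \<sigma> s i"
  using assms(1) by (rule step_GetRespE) (use assms(2) in simp_all)

lemma pending_get_step:
  assumes "step D P R part \<sigma> e \<sigma>'" "pend \<sigma> c = Some (PGet s k hrv hwv)" "\<forall>r. e \<noteq> GetResp c r"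
  shows "pend \<sigma>' c = pend \<sigma> c"
proof (cases e)
  case (GetResp c' r)
  with assms(3) have "c' \<noteq> c" by auto
  from assms(1)[unfolded GetResp] show ?thesis
    by (rule step_GetRespE) (use \<open>c' \<noteq> c\<close> in auto)
qed (use assms in \<open>auto simp: Let_def\<close>)

lemma pending_get_exec:
  assumes "is_exec D P R part \<sigma> ev" "pend (\<sigma> i) c = Some (PGet s k hrv hwv)" "i \<le> j"
    "\<forall>n. i \<le> n \<and> n < j \<longrightarrow> (\<forall>r. ev n \<noteq> GetResp c r)"
  shows "pend (\<sigma> j) c = Some (PGet s k hrv hwv)"
  using assms(3,4)
proof (induction j rule: dec_induct)
  case (step n)
  from assms(1) have "step D P R part (\<sigma> n) (ev n) (\<sigma> (Suc n))" by (simp add: is_exec_def)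
  moreover from step have "pend (\<sigma> n) c = Some (PGet s k hrv hwv)" "\<forall>r. ev n \<noteq> GetResp c r"
    by simp_all
  ultimately have "pend (\<sigma> (Suc n)) c = pend (\<sigma> n) c" by (rule pending_get_step)
  with step show ?case by simp
qed (use assms(2) in simp)

lemma GetReq_answer_dominates_hrm:
  assumes "is_exec D P R part \<sigma> ev" "ev t = GetReq c k d m True useW" "t < t'"
    "ev t' = GetResp c r" "\<forall>j. t < j \<and> j < t' \<longrightarrow> (\<forall>r'. ev j \<noteq> GetResp c r')"
  shows "\<forall>i<D. hrm (\<sigma> t) c (i, part k) \<le> sv (\<sigma> t') (d, part k, m) i"
proof -
  have step: "step D P R part (\<sigma> i) (ev i) (\<sigma> (Suc i))" for i
    using assms(1) by (simp add: is_exec_def)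
  define hrv where "hrv = (\<lambda>i. hrm (\<sigma> t) c (i, part k))"
  define hwv where "hwv = (if useW then (\<lambda>i. hwm (\<sigma> t) c (i, part k)) else (\<lambda>_. 0))"
  have "pend (\<sigma> (Suc t)) c = Some (PGet (d, part k, m) k hrv hwv)"
    using step[of t] assms(2) by (simp add: Let_def hrv_def hwv_def)
  then have "pend (\<sigma> t') c = Some (PGet (d, part k, m) k hrv hwv)"
    by (rule pending_get_exec[OF assms(1)]) (use assms(3,5) in auto)
  with step[of t'] show ?thesis
    unfolding assms(4) hrv_def by (rule GetResp_sv_dominates)
qed

lemma read_committed_if_hrm_dominated:
  assumes "is_exec D P R part \<sigma> ev" "w \<in> creads (\<sigma> t) c" "t \<le> t'"
    "\<forall>i<D. hrm (\<sigma> t) c (i, part (vkey w)) \<le> sv (\<sigma> t') (d, part (vkey w), m) i"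
  shows "w \<in> set (committed (\<sigma> t') (d, part (vkey w), m))"
proof -
  have "reads_covered D part (\<sigma> t)" "replication_inv D part (\<sigma> t')"
    using system_inv_exec[OF assms(1)] by (simp_all add: system_inv_def)
  with assms(2) have read: "vdc w < D" "vidx w \<le> hrm (\<sigma> t) c (vdc w, part (vkey w))"
    "w \<in> set (origin_log (\<sigma> t) (vdc w) (part (vkey w)))"
    unfolding reads_covered_def by auto
  have "set (origin_log (\<sigma> t) (vdc w) (part (vkey w)))
      \<subseteq> set (origin_log (\<sigma> t') (vdc w) (part (vkey w)))"
    using rlog_exec_prefix[OF assms(1,3)] by (intro set_mono_prefix origin_log_prefix)
  with read(3) have "w \<in> set (origin_log (\<sigma> t') (vdc w) (part (vkey w)))" by blast
  moreover from read(1,2) assms(4) have "vidx w \<le> sv (\<sigma> t') (d, part (vkey w), m) (vdc w)"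
    by (meson le_trans)
  ultimately show ?thesis
    using \<open>replication_inv D part (\<sigma> t')\<close> by (rule committed_if_index_le_sv[rotated])
qed

theorem mainTheorem2:
  fixes D P R :: nat and part :: "'k \<Rightarrow> nat"
    and \<sigma> :: "nat \<Rightarrow> ('c, 'k, 'v) state" and ev :: "nat \<Rightarrow> ('c, 'k, 'v) event"
    and c :: 'c and k :: 'k and d m :: nat and useW :: bool and t t' :: nat
    and r :: "('k, 'v) version option"
  assumes "\<forall>k. part k < P"
    and "is_exec D P R part \<sigma> ev"
    and "ev t = GetReq c k d m True useW"
    and "t < t'"
    and "ev t' = GetResp c r"
    and "\<forall>j. t < j \<and> j < t' \<longrightarrow> (\<forall>r'. ev j \<noteq> GetResp c r')"
  shows "\<forall>w \<in> ClientReads \<sigma> c k t. w \<in> set (CommittedWrites \<sigma> (d, part k, m) k t')"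
proof
  fix w
  assume "w \<in> ClientReads \<sigma> c k t"
  then have w: "w \<in> creads (\<sigma> t) c" "vkey w = k" by (auto simp: ClientReads_def)
  from GetReq_answer_dominates_hrm[OF assms(2-6)] w(2)
  have "\<forall>i<D. hrm (\<sigma> t) c (i, part (vkey w)) \<le> sv (\<sigma> t') (d, part (vkey w), m) i" by simp
  then have "w \<in> set (committed (\<sigma> t') (d, part (vkey w), m))"
    by (rule read_committed_if_hrm_dominated[OF assms(2) w(1) less_imp_le[OF assms(4)]])
  with w(2) show "w \<in> set (CommittedWrites \<sigma> (d, part k, m) k t')"
    by (simp add: CommittedWrites_def)
qed

end
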